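(* Let $H$ be a real separable Hilbert space, $E:H\to\mathbb R$ Fréchet differentiable, $\phi$ as in the context, $K:H\to\mathcal L(H)$ with $K(y)$ symmetric positive semidefinite, and $L:H\to\mathcal L(H)$ with $L(y)^*=-L(y)$, such that $L^*(y)\partial\phi(y)=K^*(y)DE(y)=0$ for all $y\in D(\partial\phi)$. Let $u\in L^2(0,T;H)$ and $y\in H^1(0,T;H)$ with $y(0)=y_0$, $y(t)\in D(\partial\phi)$ a.e., $\partial\phi(y)\in L^2(0,T;H)$ and $L(y)DE(y)\in L^2(0,T;H)$. Then $G^{\rm gen}_{\rm DG}(u,y)=0$ if and only if $y'=L(y)DE(y)-K(y)(\partial\phi(y)-u)$ a.e. in $(0,T)$.
   Context: $\phi=\phi_1+\phi_2$ with $\phi_1$ proper convex lsc, $\phi_2\in C^{1,1}$, $\partial\phi=\partial\phi_1+D\phi_2$ single-valued on its domain and satisfying the chain rule: if $y\in H^1(0,T;H)$, $\xi\in L^2(0,T;H)$, $\xi(t)\in\partial\phi(y(t))$ a.e., then $\phi\circ y$ is absolutely continuous with $(\phi\circ y)'=(\xi,y')$ a.e. Set $\psi^*(y,\xi)=\frac12(K(y)\xi,\xi)$ and let $\psi(y,\cdot)$ be its Legendre–Fenchel conjugate in the second variable (so $K(y)=\partial\psi^*(y,\cdot)$). Define $G^{\rm gen}_{\rm DG}(u,y)=\int_0^T\big(\psi(y,y'-L(y)DE(y))+\psi^*(y,u-\partial\phi(y))\big)dt-\int_0^T(u,y'-L(y)DE(y))\,dt+\phi(y(T))-\phi(y_0)$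 if $y\in D(\partial\phi)$ a.e. and $y(0)=y_0$, and $+\infty$ otherwise. *)

theory Defs
  imports "HOL-Analysis.Analysis"
begin

definition proper_fun :: "('a \<Rightarrow> ereal) \<Rightarrow> bool" where
  "proper_fun f \<longleftrightarrow> (\<forall>x. f x \<noteq> -\<infinity>) \<and> (\<exists>x. f x < \<infinity>)"

definition convex_ereal_fun :: "('a::real_vector \<Rightarrow> ereal) \<Rightarrow> bool" where
  "convex_ereal_fun f \<longleftrightarrow>
     (\<forall>x y. \<forall>t::real. 0 \<le> t \<and> t \<le> 1 \<longrightarrow>
        f ((1 - t) *\<^sub>R x + t *\<^sub>R y) \<le> ereal (1 - t) * f x + ereal t * f y)"

definition lsc_fun :: "('a::topological_space \<Rightarrow> ereal) \<Rightarrow> bool" where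
  "lsc_fun f \<longleftrightarrow> (\<forall>c. closed {x. f x \<le> c})"

definition subdiff :: "('a::real_inner \<Rightarrow> ereal) \<Rightarrow> 'a \<Rightarrow> 'a set" where
  "subdiff f x = {\<xi>. \<bar>f x\<bar> \<noteq> \<infinity> \<and> (\<forall>z. f x + ereal (\<xi> \<bullet> (z - x)) \<le> f z)}"

definition phi_fun :: "('a \<Rightarrow> ereal) \<Rightarrow> ('a \<Rightarrow> real) \<Rightarrow> 'a \<Rightarrow> ereal" where
  "phi_fun \<phi>1 \<phi>2 x = \<phi>1 x + ereal (\<phi>2 x)"

definition subdiff_phi :: "('a::real_inner \<Rightarrow> ereal) \<Rightarrow> ('a \<Rightarrow> 'a) \<Rightarrow> 'a \<Rightarrow> 'a set" where
  "subdiff_phi \<phi>1 D\<phi>2 x = (\<lambda>\<xi>. \<xi> + D\<phi>2 x) ` subdiff \<phi>1 x"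

definition dom_subdiff_phi :: "('a::real_inner \<Rightarrow> ereal) \<Rightarrow> ('a \<Rightarrow> 'a) \<Rightarrow> 'a set" where
  "dom_subdiff_phi \<phi>1 D\<phi>2 = {x. subdiff_phi \<phi>1 D\<phi>2 x \<noteq> {}}"

text \<open>The single value of the subdifferential of phi (meaningful on its domain).\<close>
definition dphi :: "('a::real_inner \<Rightarrow> ereal) \<Rightarrow> ('a \<Rightarrow> 'a) \<Rightarrow> 'a \<Rightarrow> 'a" where
  "dphi \<phi>1 D\<phi>2 x = (THE \<xi>. \<xi> \<in> subdiff_phi \<phi>1 D\<phi>2 x)"

definition abs_cont_on :: "real \<Rightarrow> real \<Rightarrow> (real \<Rightarrow> real) \<Rightarrow> bool" where
  "abs_cont_on a b g \<longleftrightarrow>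
     (\<forall>\<epsilon>>0. \<exists>\<delta>>0. \<forall>S :: (real \<times> real) set.
        finite S \<and> (\<forall>(s,t)\<in>S. a \<le> s \<and> s \<le> t \<and> t \<le> b) \<and>
        pairwise (\<lambda>(s,t) (s',t'). {s<..<t} \<inter> {s'<..<t'} = {}) S \<and>
        (\<Sum>(s,t)\<in>S. t - s) < \<delta>
        \<longrightarrow> (\<Sum>(s,t)\<in>S. \<bar>g t - g s\<bar>) < \<epsilon>)"

definition L2 :: "real \<Rightarrow> (real \<Rightarrow> 'a::{real_normed_vector, second_countable_topology}) \<Rightarrow> bool" where
  "L2 T f \<longleftrightarrow> f \<in> borel_measurable (lebesgue_on {0..T}) \<and>
              integrable (lebesgue_on {0..T}) (\<lambda>t. (norm (f t))\<^sup>2)"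

text \<open>y in H^1(0,T;H) with weak derivative y' (y is its continuous representative).\<close>
definition H1 :: "real \<Rightarrow> (real \<Rightarrow> 'a::{banach, second_countable_topology}) \<Rightarrow> (real \<Rightarrow> 'a) \<Rightarrow> bool" where
  "H1 T y y' \<longleftrightarrow> L2 T y \<and> L2 T y' \<and>
     (\<forall>t\<in>{0..T}. y t = y 0 + integral\<^sup>L (lebesgue_on {0..t}) y')"

definition chain_rule :: "real \<Rightarrow> ('a::{real_inner, banach, second_countable_topology} \<Rightarrow> ereal)
    \<Rightarrow> ('a \<Rightarrow> real) \<Rightarrow> ('a \<Rightarrow> 'a) \<Rightarrow> bool" where
  "chain_rule T \<phi>1 \<phi>2 D\<phi>2 \<longleftrightarrow>
     (\<forall>y y' \<xi>. H1 T y y' \<and> L2 T \<xi> \<and>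
        (AE t in lebesgue_on {0..T}. \<xi> t \<in> subdiff_phi \<phi>1 D\<phi>2 (y t))
      \<longrightarrow> (\<exists>g. abs_cont_on 0 T g \<and> (\<forall>t\<in>{0..T}. phi_fun \<phi>1 \<phi>2 (y t) = ereal (g t)) \<and>
             (AE t in lebesgue_on {0..T}. (g has_real_derivative (\<xi> t \<bullet> y' t)) (at t))))"

definition psi_star :: "('a \<Rightarrow> 'a \<Rightarrow> 'a::real_inner) \<Rightarrow> 'a \<Rightarrow> 'a \<Rightarrow> ereal" where
  "psi_star K y \<xi> = ereal ((1/2) * (K y \<xi> \<bullet> \<xi>))"

definition psi :: "('a \<Rightarrow> 'a \<Rightarrow> 'a::real_inner) \<Rightarrow> 'a \<Rightarrow> 'a \<Rightarrow> ereal" where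
  "psi K y v = (SUP \<xi>. ereal (v \<bullet> \<xi>) - psi_star K y \<xi>)"

definition G_DG :: "real \<Rightarrow> ('a \<Rightarrow> 'a \<Rightarrow> 'a::{real_inner, banach, second_countable_topology})
    \<Rightarrow> ('a \<Rightarrow> 'a \<Rightarrow> 'a) \<Rightarrow> ('a \<Rightarrow> 'a) \<Rightarrow> ('a \<Rightarrow> ereal) \<Rightarrow> ('a \<Rightarrow> real) \<Rightarrow> ('a \<Rightarrow> 'a)
    \<Rightarrow> 'a \<Rightarrow> (real \<Rightarrow> 'a) \<Rightarrow> (real \<Rightarrow> 'a) \<Rightarrow> (real \<Rightarrow> 'a) \<Rightarrow> ereal" where
  "G_DG T K L DE \<phi>1 \<phi>2 D\<phi>2 y0 u y y' =
     (if (AE t in lebesgue_on {0..T}. y t \<in> dom_subdiff_phi \<phi>1 D\<phi>2) \<and> y 0 = y0 then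
        enn2ereal (\<integral>\<^sup>+ t. e2ennreal
            (psi K (y t) (y' t - L (y t) (DE (y t)))
             + psi_star K (y t) (u t - dphi \<phi>1 D\<phi>2 (y t))) \<partial>lebesgue_on {0..T})
        - ereal (\<integral> t. u t \<bullet> (y' t - L (y t) (DE (y t))) \<partial>lebesgue_on {0..T})
        + phi_fun \<phi>1 \<phi>2 (y T) - phi_fun \<phi>1 \<phi>2 y0
      else \<infinity>)"

end

theory Submission
  imports Defs
begin

text \<open>Write v = y' - L(y) DE(y) and w = u - \<partial>\<phi>(y). Pointwise, the Fenchel--Young inequality
  gives \<psi>(y, v) + \<psi>*(y, w) \<ge> (w, v), with equality exactly when v = K(y) w, i.e. when the
  evolution equation holds at that time. By the chain rule, \<phi>(y(T)) - \<phi>(y0) is the integral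
  of (\<partial>\<phi>(y), y'), and since L(y)* \<partial>\<phi>(y) = 0 this equals the integral of (\<partial>\<phi>(y), v). Hence
  G is the integral of the nonnegative defect \<psi> + \<psi>* - (w, v), which vanishes if and only if
  the defect vanishes almost everywhere. Turning the chain rule into this integral identity needs
  the fundamental theorem of calculus for absolutely continuous functions that are differentiable
  almost everywhere (a gauge-integral argument), and adjoints on a general Hilbert space need the
  Riesz representation theorem.\<close>

section \<open>Riesz representation and adjoints\<close>

lemma convex_norm_diff_sq_le:
  fixes S :: "'a::real_inner set"
  assumes "convex S" "x \<in> S" "y \<in> S" "\<And>w. w \<in> S \<Longrightarrow> d \<le> (norm w)\<^sup>2"
  shows "(norm (x - y))\<^sup>2 \<le> 2 * (norm x)\<^sup>2 + 2 * (norm y)\<^sup>2 - 4 * d"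
proof -
  have "(1/2) *\<^sub>R x + (1/2) *\<^sub>R y \<in> S"
    using assms(1-3) by (intro convexD) auto
  then have "d \<le> (norm (x + y))\<^sup>2 / 4"
    using assms(4) by (force simp: scaleR_right_distrib[symmetric] power_divide)
  moreover have "(norm (x - y))\<^sup>2 + (norm (x + y))\<^sup>2 = 2 * (norm x)\<^sup>2 + 2 * (norm y)\<^sup>2"
    by (simp add: power2_norm_eq_inner inner_diff inner_add inner_commute)
  ultimately show ?thesis by linarith
qed

lemma closed_convex_has_min_norm:
  fixes S :: "'a::{real_inner,complete_space} set"
  assumes "closed S" "convex S" "S \<noteq> {}"
  obtains z where "z \<in> S" "\<And>x. x \<in> S \<Longrightarrow> norm z \<le> norm x"
proof -
  define d where "d = Inf ((\<lambda>x. (norm x)\<^sup>2) ` S)"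
  have bdd: "bdd_below ((\<lambda>x. (norm x)\<^sup>2) ` S)"
    by (intro bdd_belowI[of _ 0]) auto
  have d_le: "d \<le> (norm x)\<^sup>2" if "x \<in> S" for x
    unfolding d_def using bdd that by (auto intro: cInf_lower)
  have "\<exists>x\<in>S. (norm x)\<^sup>2 < d + 1 / (real n + 1)" for n
    using cInf_lessD[of "(\<lambda>x. (norm x)\<^sup>2) ` S" "d + 1 / (real n + 1)"] \<open>S \<noteq> {}\<close>
    unfolding d_def by auto
  then obtain xs where xs_in: "\<And>n. xs n \<in> S" and xs_lt: "\<And>n. (norm (xs n))\<^sup>2 < d + 1 / (real n + 1)"
    by metis
  have close: "(norm (xs m - xs n))\<^sup>2 \<le> 2 / (real m + 1) + 2 / (real n + 1)" for m n
    using convex_norm_diff_sq_le[OF \<open>convex S\<close> xs_in[of m] xs_in[of n] d_le] xs_lt[of m] xs_lt[of n] by linarith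
  have "Cauchy xs"
  proof (rule metric_CauchyI)
    fix e :: real assume "e > 0"
    obtain M :: nat where "4 / e\<^sup>2 < real M"
      using reals_Archimedean2 by blast
    then have M: "4 / e\<^sup>2 < real M + 1" by linarith
    have "dist (xs m) (xs n) < e" if "M \<le> m" "M \<le> n" for m n
    proof -
      have "2 / (real m + 1) \<le> 2 / (real M + 1)" "2 / (real n + 1) \<le> 2 / (real M + 1)"
        using that by (simp_all add: frac_le)
      then have "2 / (real m + 1) + 2 / (real n + 1) \<le> 4 / (real M + 1)" by simp
      also have "\<dots> < e\<^sup>2"
        using M \<open>e > 0\<close> by (simp add: field_simps)
      finally have "(norm (xs m - xs n))\<^sup>2 < e\<^sup>2"
        using close[of m n] by linarith
      then show ?thesis
        using \<open>e > 0\<close> by (simp add: dist_norm power_less_imp_less_base)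
    qed
    then show "\<exists>M. \<forall>m\<ge>M. \<forall>n\<ge>M. dist (xs m) (xs n) < e" by blast
  qed
  then obtain z where lim: "xs \<longlonglongrightarrow> z"
    using Cauchy_convergent_iff convergent_def by blast
  have "z \<in> S"
    using \<open>closed S\<close> xs_in lim closed_sequentially by blast
  moreover have "(norm z)\<^sup>2 \<le> d"
  proof (rule LIMSEQ_le)
    show "(\<lambda>n. (norm (xs n))\<^sup>2) \<longlonglongrightarrow> (norm z)\<^sup>2"
      by (intro tendsto_intros lim)
    show "(\<lambda>n. d + 1 / (real n + 1)) \<longlonglongrightarrow> d"
      using LIMSEQ_inverse_real_of_nat_add[of d] by (simp add: inverse_eq_divide add.commute)
  qed (use xs_lt less_imp_le in blast)
  ultimately show ?thesis
    using that d_le by (meson order_trans power2_le_imp_le norm_ge_zero)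
qed

lemma orthogonal_if_norm_le_norm_add_scaleR:
  fixes z k :: "'a::real_inner"
  assumes "\<And>t. norm z \<le> norm (z + t *\<^sub>R k)"
  shows "z \<bullet> k = 0"
proof (cases "k = 0")
  case False
  define t where "t = - (z \<bullet> k) / (k \<bullet> k)"
  have kk: "k \<bullet> k > 0" using False by simp
  have "z \<bullet> z \<le> (z + t *\<^sub>R k) \<bullet> (z + t *\<^sub>R k)"
    using assms[of t] by (simp add: power_mono flip: power2_norm_eq_inner)
  also have "\<dots> = z \<bullet> z + 2 * t * (z \<bullet> k) + t\<^sup>2 * (k \<bullet> k)"
    by (simp add: inner_add inner_commute power2_eq_square algebra_simps)
  also have "\<dots> = z \<bullet> z - (z \<bullet> k)\<^sup>2 / (k \<bullet> k)"
    using kk by (simp add: t_def field_simps power2_eq_square)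
  finally have "(z \<bullet> k)\<^sup>2 / (k \<bullet> k) \<le> 0" by simp
  then show ?thesis using kk by (simp add: divide_le_0_iff)
qed simp

lemma riesz_representation:
  fixes f :: "'a::{real_inner,complete_space} \<Rightarrow> real"
  assumes "bounded_linear f"
  obtains z where "\<And>x. f x = z \<bullet> x"
proof (cases "\<forall>x. f x = 0")
  case True
  then show ?thesis using that[of 0] by simp
next
  case False
  interpret f: bounded_linear f by fact
  obtain a where "f a \<noteq> 0" using False by blast
  define C where "C = {x. f x = 1}"
  have "closed C"
    unfolding C_def by (intro closed_Collect_eq continuous_intros f.continuous_on continuous_on_id)
  moreover have "convex C"
    unfolding C_def convex_def by (simp add: f.add f.scale algebra_simps)
  moreover have "a /\<^sub>R f a \<in> C"
    using \<open>f a \<noteq> 0\<close> by (simp add: C_def f.scale)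
  ultimately obtain z where "z \<in> C" and z_min: "\<And>x. x \<in> C \<Longrightarrow> norm z \<le> norm x"
    using closed_convex_has_min_norm by blast
  then have fz: "f z = 1" by (simp add: C_def)
  \<comment> \<open>The minimal-norm point of the hyperplane f = 1 is orthogonal to the kernel of f.\<close>
  have ker: "z \<bullet> k = 0" if "f k = 0" for k
    using that fz by (intro orthogonal_if_norm_le_norm_add_scaleR z_min) (simp add: C_def f.add f.scale)
  have "f x = (z /\<^sub>R (z \<bullet> z)) \<bullet> x" for x
  proof -
    have "z \<bullet> (x - f x *\<^sub>R z) = 0"
      using fz by (intro ker) (simp add: f.diff f.scale)
    then show ?thesis
      using fz by (auto simp: inner_diff_right field_simps)
  qed
  then show ?thesis by (rule that)
qed

lemma adjoint_works_hilbert: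
  fixes f :: "'a::{real_inner,complete_space} \<Rightarrow> 'a"
  assumes "bounded_linear f"
  shows "x \<bullet> adjoint f y = f x \<bullet> y"
proof -
  have "\<forall>y. \<exists>w. \<forall>x. f x \<bullet> y = x \<bullet> w"
  proof
    fix y
    have "bounded_linear (\<lambda>x. f x \<bullet> y)"
      using bounded_linear_compose[OF bounded_linear_inner_left assms] .
    then obtain w where "\<And>x. f x \<bullet> y = w \<bullet> x" using riesz_representation by metis
    then show "\<exists>w. \<forall>x. f x \<bullet> y = x \<bullet> w" by (metis inner_commute)
  qed
  then show ?thesis
    unfolding adjoint_def choice_iff
    by (intro someI2_ex[where Q="\<lambda>f'. x \<bullet> f' y = f x \<bullet> y"]) auto
qed

lemma inner_eq_zero_if_adjoint_eq_zero:
  fixes A :: "'a::{real_inner,complete_space} \<Rightarrow> 'a"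
  assumes "bounded_linear A" "adjoint A w = 0"
  shows "w \<bullet> A v = 0"
  using adjoint_works_hilbert[OF assms(1), of v w] assms(2) by (simp add: inner_commute)

section \<open>The dissipation potential and its conjugate\<close>

lemma nonpos_if_linear_le_quadratic:
  fixes n c :: real
  assumes "\<And>s. 0 < s \<Longrightarrow> s * n \<le> s\<^sup>2 * c"
  shows "n \<le> 0"
proof (rule ccontr)
  assume "\<not> n \<le> 0"
  then have "0 < n" by simp
  show False
  proof (cases "c \<le> 0")
    case True
    then show False using assms[of 1] \<open>0 < n\<close> by simp
  next
    case False
    have "0 < n / (2 * c)"
      using \<open>0 < n\<close> False by simp
    then have "n / (2 * c) * n \<le> (n / (2 * c))\<^sup>2 * c"
      by (rule assms)
    then show False
      using \<open>0 < n\<close> False by (simp add: power2_eq_square field_simps)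
  qed
qed

lemma psi_nonneg: "0 \<le> psi K y v"
proof -
  have "ereal (v \<bullet> 0) - psi_star K y 0 \<le> psi K y v"
    unfolding psi_def by (rule SUP_upper) simp
  then show ?thesis by (simp add: psi_star_def)
qed

lemma psi_star_nonneg:
  assumes "\<And>v. 0 \<le> K y v \<bullet> v"
  shows "0 \<le> psi_star K y w"
  using assms[of w] by (simp add: psi_star_def)

lemma fenchel_young_psi:
  "ereal (w \<bullet> v) \<le> psi K y v + psi_star K y w"
proof -
  have "ereal (v \<bullet> w) - psi_star K y w \<le> psi K y v"
    unfolding psi_def by (rule SUP_upper) simp
  then have "ereal (v \<bullet> w) - psi_star K y w + psi_star K y w \<le> psi K y v + psi_star K y w"
    by (rule add_right_mono)
  then show ?thesis
    by (simp add: psi_star_def inner_commute)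
qed

lemma psi_apply_K:
  assumes lin: "bounded_linear (K y)" and sym: "\<And>a b. K y a \<bullet> b = a \<bullet> K y b"
    and psd: "\<And>v. 0 \<le> K y v \<bullet> v"
  shows "psi K y (K y w) = ereal ((1/2) * (K y w \<bullet> w))"
proof (rule antisym)
  interpret k: bounded_linear "K y" by (fact lin)
  show "psi K y (K y w) \<le> ereal ((1/2) * (K y w \<bullet> w))"
    unfolding psi_def psi_star_def
  proof (rule SUP_least)
    fix \<xi>
    have "0 \<le> K y (\<xi> - w) \<bullet> (\<xi> - w)" by (rule psd)
    also have "\<dots> = K y \<xi> \<bullet> \<xi> - 2 * (K y w \<bullet> \<xi>) + K y w \<bullet> w"
      using sym[of \<xi> w] by (simp add: k.diff inner_diff_left inner_diff_right inner_commute)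
    finally show "ereal (K y w \<bullet> \<xi>) - ereal ((1/2) * (K y \<xi> \<bullet> \<xi>)) \<le> ereal ((1/2) * (K y w \<bullet> w))"
      by simp
  qed
  have "ereal (K y w \<bullet> w) - psi_star K y w \<le> psi K y (K y w)"
    unfolding psi_def by (rule SUP_upper) simp
  then show "ereal ((1/2) * (K y w \<bullet> w)) \<le> psi K y (K y w)"
    by (simp add: psi_star_def)
qed

lemma fenchel_young_psi_eq_iff:
  assumes lin: "bounded_linear (K y)" and sym: "\<And>a b. K y a \<bullet> b = a \<bullet> K y b"
    and psd: "\<And>v. 0 \<le> K y v \<bullet> v"
  shows "psi K y v + psi_star K y w = ereal (w \<bullet> v) \<longleftrightarrow> v = K y w"
proof
  interpret k: bounded_linear "K y" by (fact lin)
  assume "psi K y v + psi_star K y w = ereal (w \<bullet> v)"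
  then have psi_v: "psi K y v = ereal (w \<bullet> v - (1/2) * (K y w \<bullet> w))"
    unfolding psi_star_def by (cases "psi K y v") auto
  define z where "z = v - K y w"
  \<comment> \<open>Testing the supremum defining psi at w + s z.\<close>
  have "s * (z \<bullet> z) \<le> s\<^sup>2 * ((1/2) * (K y z \<bullet> z))" if "0 < s" for s
  proof -
    have "ereal (v \<bullet> (w + s *\<^sub>R z)) - psi_star K y (w + s *\<^sub>R z) \<le> psi K y v"
      unfolding psi_def by (rule SUP_upper) simp
    moreover have "K y (w + s *\<^sub>R z) \<bullet> (w + s *\<^sub>R z)
        = K y w \<bullet> w + 2 * s * (K y w \<bullet> z) + s\<^sup>2 * (K y z \<bullet> z)"
      using sym[of z w] by (simp add: k.add k.scale inner_add_left inner_add_right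
          inner_commute power2_eq_square algebra_simps)
    moreover have "v \<bullet> z - K y w \<bullet> z = z \<bullet> z"
      by (simp add: z_def inner_diff_left)
    ultimately show ?thesis
      by (simp add: psi_v psi_star_def inner_add_right inner_commute algebra_simps)
  qed
  then have "z \<bullet> z \<le> 0"
    by (rule nonpos_if_linear_le_quadratic)
  then have "z = 0"
    by (metis inner_eq_zero_iff inner_ge_zero order_antisym)
  then show "v = K y w"
    by (simp add: z_def)
next
  assume "v = K y w"
  then show "psi K y v + psi_star K y w = ereal (w \<bullet> v)"
    using psi_apply_K[of K y, OF lin sym psd] sym[of w w] by (simp add: psi_star_def inner_commute)
qed

section \<open>Absolutely continuous functions\<close>

lemma division_of_real_interval:
  fixes K :: "real set"
  assumes "D division_of S" "K \<in> D"
  shows "K = {Inf K..Sup K}" "Inf K \<le> Sup K"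
proof -
  obtain u v where "K = cbox u v" "K \<noteq> {}"
    using assms by blast
  then have "K = {u..v}" "u \<le> v" by (auto simp: cbox_interval)
  then show "K = {Inf K..Sup K}" "Inf K \<le> Sup K" by auto
qed

lemma abs_cont_on_division:
  assumes "abs_cont_on a b g" "0 < \<epsilon>"
  obtains \<delta> where "0 < \<delta>"
    "\<And>D S. D division_of S \<Longrightarrow> S \<subseteq> {a..b} \<Longrightarrow> measure lebesgue S < \<delta> \<Longrightarrow>
       (\<Sum>K\<in>D. \<bar>g (Sup K) - g (Inf K)\<bar>) < \<epsilon>"
proof -
  obtain \<delta> where "0 < \<delta>" and ac: "\<And>P. finite P \<Longrightarrow> (\<forall>(s,t)\<in>P. a \<le> s \<and> s \<le> t \<and> t \<le> b) \<Longrightarrow>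
      pairwise (\<lambda>(s,t) (s',t'). {s<..<t} \<inter> {s'<..<t'} = {}) P \<Longrightarrow>
      (\<Sum>(s,t)\<in>P. t - s) < \<delta> \<Longrightarrow> (\<Sum>(s,t)\<in>P. \<bar>g t - g s\<bar>) < \<epsilon>"
    using assms unfolding abs_cont_on_def by meson
  have "(\<Sum>K\<in>D. \<bar>g (Sup K) - g (Inf K)\<bar>) < \<epsilon>"
    if D: "D division_of S" and "S \<subseteq> {a..b}" and small: "measure lebesgue S < \<delta>" for D S
  proof -
    note K_eq = division_of_real_interval[OF D]
    define ends where "ends K = (Inf K, Sup K)" for K :: "real set"
    have inj: "inj_on ends D"
      by (rule inj_onI) (metis K_eq(1) ends_def prod.inject)
    have interior_K: "interior K = {Inf K<..<Sup K}" if "K \<in> D" for K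
      by (subst K_eq(1)[OF that]) simp
    have "pairwise (\<lambda>(s,t) (s',t'). {s<..<t} \<inter> {s'<..<t'} = {}) (ends ` D)"
    proof (rule pairwise_imageI)
      fix K K' assume "K \<in> D" "K' \<in> D" "K \<noteq> K'" "ends K \<noteq> ends K'"
      then have "interior K \<inter> interior K' = {}"
        using division_ofD(5)[OF D] by blast
      then show "(\<lambda>(s,t) (s',t'). {s<..<t} \<inter> {s'<..<t'} = {}) (ends K) (ends K')"
        using interior_K \<open>K \<in> D\<close> \<open>K' \<in> D\<close> by (simp add: ends_def)
    qed
    moreover have "\<forall>(s,t)\<in>ends ` D. a \<le> s \<and> s \<le> t \<and> t \<le> b"
    proof (clarsimp simp: ends_def)
      fix K assume "K \<in> D"
      then have "{Inf K..Sup K} \<subseteq> {a..b}" "Inf K \<le> Sup K"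
        using K_eq division_ofD(2)[OF D] \<open>S \<subseteq> {a..b}\<close> by (metis order_trans, auto)
      then show "a \<le> Inf K \<and> Inf K \<le> Sup K \<and> Sup K \<le> b" by auto
    qed
    moreover have "(\<Sum>(s,t)\<in>ends ` D. t - s) = measure lebesgue S"
    proof -
      have "measure lebesgue K = Sup K - Inf K" if "K \<in> D" for K
        using K_eq[OF that] by (metis measure_lborel_Icc measure_completion sets_lborel atLeastAtMost_borel)
      then show ?thesis
        using content_division[OF D] unfolding sum.reindex[OF inj] by (simp add: ends_def)
    qed
    ultimately have "(\<Sum>(s,t)\<in>ends ` D. \<bar>g t - g s\<bar>) < \<epsilon>"
      using ac[of "ends ` D"] division_ofD(1)[OF D] small by auto
    then show ?thesis
      unfolding sum.reindex[OF inj] by (simp add: ends_def)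
  qed
  with \<open>0 < \<delta>\<close> show ?thesis using that by blast
qed

lemma abs_cont_on_tagged_partial_division:
  assumes "abs_cont_on a b g" "0 < \<epsilon>"
  obtains \<delta> where "0 < \<delta>"
    "\<And>q. q tagged_partial_division_of {a..b} \<Longrightarrow> measure lebesgue (\<Union>(snd ` q)) < \<delta> \<Longrightarrow>
       (\<Sum>(x,K)\<in>q. \<bar>g (Sup K) - g (Inf K)\<bar>) < \<epsilon>"
proof -
  obtain \<delta> where "0 < \<delta>" and ac: "\<And>D S. D division_of S \<Longrightarrow> S \<subseteq> {a..b} \<Longrightarrow>
      measure lebesgue S < \<delta> \<Longrightarrow> (\<Sum>K\<in>D. \<bar>g (Sup K) - g (Inf K)\<bar>) < \<epsilon>"
    using abs_cont_on_division[OF assms] by blast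
  have "(\<Sum>(x,K)\<in>q. \<bar>g (Sup K) - g (Inf K)\<bar>) < \<epsilon>"
    if q: "q tagged_partial_division_of {a..b}" and small: "measure lebesgue (\<Union>(snd ` q)) < \<delta>" for q
  proof -
    have D: "snd ` q division_of \<Union>(snd ` q)"
      by (rule partial_division_of_tagged_division[OF q])
    \<comment> \<open>An interval carrying two different tags has empty interior, hence contributes nothing.\<close>
    have "(\<Sum>K\<in>snd ` q. \<bar>g (Sup K) - g (Inf K)\<bar>) = (\<Sum>(x,K)\<in>q. \<bar>g (Sup K) - g (Inf K)\<bar>)"
    proof (subst sum.reindex_nontrivial)
      show "finite q" using tagged_partial_division_ofD(1)[OF q] .
      fix xK xK' assume "xK \<in> q" "xK' \<in> q" "xK \<noteq> xK'" "snd xK = snd xK'"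
      then have "interior (snd xK) = {}"
        using tagged_partial_division_ofD(5)[OF q] by (metis inf.idem prod.collapse)
      moreover have "snd xK = {Inf (snd xK)..Sup (snd xK)}"
        using division_of_real_interval(1)[OF D] \<open>xK \<in> q\<close> by blast
      ultimately have "Inf (snd xK) = Sup (snd xK)"
        using division_of_real_interval(2)[OF D] \<open>xK \<in> q\<close>
        by (metis image_eqI interior_atLeastAtMost_real greaterThanLessThan_empty_iff order_antisym_conv)
      then show "\<bar>g (Sup (snd xK)) - g (Inf (snd xK))\<bar> = 0" by simp
    qed (simp add: comp_def case_prod_unfold)
    moreover have "\<Union>(snd ` q) \<subseteq> {a..b}"
      using tagged_partial_division_ofD(3)[OF q] by force
    ultimately show ?thesis
      using ac[OF D _ small] by simp
  qed
  with \<open>0 < \<delta>\<close> show ?thesis using that by blast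
qed

lemma negligible_subset_open_small_measure:
  fixes N :: "'a::euclidean_space set"
  assumes "negligible N" "0 < \<delta>"
  obtains U where "open U" "N \<subseteq> U" "U \<in> lmeasurable" "measure lebesgue U < \<delta>"
proof -
  obtain U where U: "open U" "N \<subseteq> U" "U - N \<in> lmeasurable" "emeasure lebesgue (U - N) < ennreal \<delta>"
    using sets_lebesgue_outer_open[OF negligible_imp_sets[OF assms(1)] assms(2)] by blast
  have U_eq: "U = (U - N) \<union> N" using U(2) by blast
  have "U \<in> lmeasurable"
    by (subst U_eq) (intro fmeasurable.Un U(3) negligible_imp_measurable assms(1))
  moreover have "measure lebesgue U = measure lebesgue (U - N)"
    by (subst U_eq) (intro measure_Un_null_set fmeasurableD U(3) assms(1)[unfolded negligible_iff_null_sets])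
  moreover have "measure lebesgue (U - N) < \<delta>"
    using U(3,4) assms(2) by (simp add: emeasure_eq_measure2 ennreal_less_iff)
  ultimately show ?thesis using that U(1,2) by simp
qed

lemma real_derivative_straddle:
  assumes "(g has_real_derivative g') (at x)" "0 < e"
  obtains d where "0 < d"
    "\<And>u v. u \<le> x \<Longrightarrow> x \<le> v \<Longrightarrow> {u..v} \<subseteq> ball x d \<Longrightarrow>
       \<bar>(v - u) * g' - (g v - g u)\<bar> \<le> e * (v - u)"
proof -
  have "(g has_derivative (\<lambda>z. g' * z)) (at x)"
    using assms(1) by (simp add: has_field_derivative_def)
  then obtain d where "0 < d" and d: "\<And>y. \<bar>y - x\<bar> < d \<Longrightarrow> \<bar>g y - g x - g' * (y - x)\<bar> \<le> e * \<bar>y - x\<bar>"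
    using assms(2) unfolding has_derivative_at_alt by (metis real_norm_def)
  have "\<bar>(v - u) * g' - (g v - g u)\<bar> \<le> e * (v - u)"
    if "u \<le> x" "x \<le> v" "{u..v} \<subseteq> ball x d" for u v
  proof -
    have "u \<in> {u..v}" "v \<in> {u..v}"
      using that(1,2) by auto
    then have "u \<in> ball x d" "v \<in> ball x d"
      using that(3) by blast+
    then have "\<bar>u - x\<bar> < d" "\<bar>v - x\<bar> < d"
      by (auto simp: dist_real_def abs_minus_commute)
    then have "\<bar>g u - g x - g' * (u - x)\<bar> + \<bar>g v - g x - g' * (v - x)\<bar> \<le> e * \<bar>u - x\<bar> + e * \<bar>v - x\<bar>"
      using d by (meson add_mono)
    also have "\<dots> = e * (v - u)"
      using that by (simp add: algebra_simps)
    finally show ?thesis by (simp add: algebra_simps abs_le_iff)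
  qed
  with \<open>0 < d\<close> show ?thesis using that by blast
qed

lemma real_derivative_straddle_gauge:
  assumes "\<And>x. x \<in> S \<Longrightarrow> (g has_real_derivative g' x) (at x)" "0 < e"
  obtains d where "\<And>x. 0 < d x"
    "\<And>x u v. x \<in> S \<Longrightarrow> u \<le> x \<Longrightarrow> x \<le> v \<Longrightarrow> {u..v} \<subseteq> ball x (d x) \<Longrightarrow>
       \<bar>(v - u) * g' x - (g v - g u)\<bar> \<le> e * (v - u)"
proof -
  have "\<forall>x. \<exists>\<rho>>0. x \<in> S \<longrightarrow> (\<forall>u v. u \<le> x \<longrightarrow> x \<le> v \<longrightarrow> {u..v} \<subseteq> ball x \<rho> \<longrightarrow>
      \<bar>(v - u) * g' x - (g v - g u)\<bar> \<le> e * (v - u))"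
  proof
    fix x
    show "\<exists>\<rho>>0. x \<in> S \<longrightarrow> (\<forall>u v. u \<le> x \<longrightarrow> x \<le> v \<longrightarrow> {u..v} \<subseteq> ball x \<rho> \<longrightarrow>
      \<bar>(v - u) * g' x - (g v - g u)\<bar> \<le> e * (v - u))"
    proof (cases "x \<in> S")
      case True
      obtain \<rho> where "0 < \<rho>" "\<And>u v. u \<le> x \<Longrightarrow> x \<le> v \<Longrightarrow> {u..v} \<subseteq> ball x \<rho> \<Longrightarrow>
          \<bar>(v - u) * g' x - (g v - g u)\<bar> \<le> e * (v - u)"
        using real_derivative_straddle[OF assms(1)[OF True] assms(2)] by blast
      then show ?thesis by blast
    qed (auto intro: exI[of _ 1])
  qed
  then show ?thesis using that by metis
qed

lemma tagged_division_sum_deviation_le: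
  fixes f g :: "real \<Rightarrow> real"
  assumes p: "p tagged_division_of {a..b}" and "a \<le> b"
    and tag_estimate: "\<And>x K. (x,K) \<in> p \<Longrightarrow> \<bar>measure lborel K * f x - (g (Sup K) - g (Inf K))\<bar>
        \<le> c * measure lborel K + (if x \<in> N then \<bar>g (Sup K) - g (Inf K)\<bar> else 0)"
  shows "\<bar>(\<Sum>(x,K)\<in>p. measure lborel K * f x) - (g b - g a)\<bar>
    \<le> c * (b - a) + (\<Sum>(x,K)\<in>{xK \<in> p. fst xK \<in> N}. \<bar>g (Sup K) - g (Inf K)\<bar>)"
proof -
  let ?\<Delta> = "\<lambda>K. g (Sup K) - g (Inf K)"
  have content_sum: "(\<Sum>(x,K)\<in>p. c * measure lborel K) = c * (b - a)"
    using additive_content_tagged_division[of p a b] p \<open>a \<le> b\<close>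
    by (simp add: sum_distrib_left[symmetric] case_prod_unfold)
  have "\<bar>(\<Sum>(x,K)\<in>p. measure lborel K * f x) - (g b - g a)\<bar> = \<bar>\<Sum>(x,K)\<in>p. measure lborel K * f x - ?\<Delta> K\<bar>"
    using additive_tagged_division_1[OF \<open>a \<le> b\<close> p, of g]
    by (simp add: sum_subtractf case_prod_unfold)
  also have "\<dots> \<le> (\<Sum>(x,K)\<in>p. c * measure lborel K + (if x \<in> N then \<bar>?\<Delta> K\<bar> else 0))"
    by (rule order_trans[OF sum_abs]) (use tag_estimate in \<open>auto intro: sum_mono\<close>)
  also have "\<dots> = c * (b - a) + (\<Sum>(x,K)\<in>{xK \<in> p. fst xK \<in> N}. \<bar>?\<Delta> K\<bar>)"
    using tagged_division_ofD(1)[OF p] content_sum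
    by (simp add: sum.distrib case_prod_unfold sum.inter_filter)
  finally show ?thesis .
qed

lemma has_integral_abs_cont_ae_derivative:
  assumes "a < b" and ac: "abs_cont_on a b g" and "negligible N"
    and deriv: "\<And>t. t \<in> {a..b} - N \<Longrightarrow> (g has_real_derivative h t) (at t)"
  shows "(h has_integral (g b - g a)) {a..b}"
proof -
  define h0 where "h0 t = (if t \<in> N then 0 else h t)" for t
  have "(h0 has_integral (g b - g a)) {a..b}"
    unfolding has_integral_factor_content_real
  proof (intro allI impI)
    fix e :: real assume "e > 0"
    let ?\<Delta> = "\<lambda>K. g (Sup K) - g (Inf K)"
    have "0 < e * (b - a) / 2"
      using \<open>a < b\<close> \<open>e > 0\<close> by simp
    then obtain \<delta> where "0 < \<delta>" and small: "\<And>q. q tagged_partial_division_of {a..b} \<Longrightarrow>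
        measure lebesgue (\<Union>(snd ` q)) < \<delta> \<Longrightarrow> (\<Sum>(x,K)\<in>q. \<bar>?\<Delta> K\<bar>) < e * (b - a) / 2"
      using abs_cont_on_tagged_partial_division[OF ac] by blast
    obtain U where "open U" "N \<subseteq> U" "U \<in> lmeasurable" "measure lebesgue U < \<delta>"
      using negligible_subset_open_small_measure[OF \<open>negligible N\<close> \<open>0 < \<delta>\<close>] .
    \<comment> \<open>Tags in N get intervals inside U, where absolute continuity takes over from differentiability.\<close>
    have "\<forall>x. \<exists>\<rho>>0. x \<in> N \<longrightarrow> ball x \<rho> \<subseteq> U"
      using \<open>open U\<close> \<open>N \<subseteq> U\<close> open_contains_ball by (metis subsetD zero_less_one)
    then obtain r where r: "\<And>x. 0 < r x" "\<And>x. x \<in> N \<Longrightarrow> ball x (r x) \<subseteq> U"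
      by metis
    obtain d where d: "\<And>x. 0 < d x" "\<And>x u v. x \<in> {a..b} - N \<Longrightarrow> u \<le> x \<Longrightarrow> x \<le> v \<Longrightarrow>
        {u..v} \<subseteq> ball x (d x) \<Longrightarrow> \<bar>(v - u) * h x - (g v - g u)\<bar> \<le> e/2 * (v - u)"
      using real_derivative_straddle_gauge[where S="{a..b} - N" and e="e/2", OF deriv] \<open>e > 0\<close> by auto
    define \<gamma> where "\<gamma> x = (if x \<in> N then ball x (r x) else ball x (d x))" for x
    show "\<exists>\<gamma>. gauge \<gamma> \<and> (\<forall>p. p tagged_division_of {a..b} \<and> \<gamma> fine p \<longrightarrow>
      norm ((\<Sum>(x,K)\<in>p. measure lborel K *\<^sub>R h0 x) - (g b - g a)) \<le> e * measure lborel {a..b})"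
    proof (intro exI conjI allI impI)
      show "gauge \<gamma>" unfolding \<gamma>_def gauge_def using r(1) d(1) by auto
      fix p assume "p tagged_division_of {a..b} \<and> \<gamma> fine p"
      then have p: "p tagged_division_of {a..b}" and fine: "\<gamma> fine p" by auto
      define q where "q = {xK \<in> p. fst xK \<in> N}"
      have tag_estimate: "\<bar>measure lborel K * h0 x - ?\<Delta> K\<bar>
          \<le> e/2 * measure lborel K + (if x \<in> N then \<bar>?\<Delta> K\<bar> else 0)" if xK: "(x,K) \<in> p" for x K
      proof -
        obtain u v where K: "K = {u..v}" "u \<le> x" "x \<le> v"
          using tagged_division_ofD(2,4)[OF p xK] by (metis atLeastAtMost_iff cbox_interval)
        show ?thesis
        proof (cases "x \<in> N")
          case False
          then have "x \<in> {a..b} - N" using tagged_division_ofD(2,3)[OF p xK] by auto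
          moreover have "{u..v} \<subseteq> ball x (d x)"
            using fineD[OF fine xK] False K by (simp add: \<gamma>_def)
          ultimately show ?thesis
            using d(2)[of x u v] K False by (simp add: h0_def)
        qed (use K \<open>e > 0\<close> in \<open>simp add: h0_def abs_minus_commute\<close>)
      qed
      have q: "q tagged_partial_division_of {a..b}"
        using p by (auto intro: tagged_partial_division_subset simp: tagged_division_of_def q_def)
      have "\<Union>(snd ` q) \<subseteq> U"
        using fine r(2) by (force simp: q_def fine_def \<gamma>_def)
      then have "measure lebesgue (\<Union>(snd ` q)) \<le> measure lebesgue U"
        using \<open>U \<in> lmeasurable\<close> lmeasurable_division[OF partial_division_of_tagged_division[OF q]]
        by (intro measure_mono_fmeasurable) auto
      then have "(\<Sum>(x,K)\<in>q. \<bar>?\<Delta> K\<bar>) < e * (b - a) / 2"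
        using small[OF q] \<open>measure lebesgue U < \<delta>\<close> by linarith
      then show "norm ((\<Sum>(x,K)\<in>p. measure lborel K *\<^sub>R h0 x) - (g b - g a)) \<le> e * measure lborel {a..b}"
        using tagged_division_sum_deviation_le[OF p _ tag_estimate] \<open>a < b\<close> by (simp add: q_def)
    qed
  qed
  then show ?thesis
    by (rule has_integral_spike[OF \<open>negligible N\<close>, rotated]) (simp add: h0_def)
qed

lemma L2_diff:
  fixes f g :: "real \<Rightarrow> 'a::{real_normed_vector, second_countable_topology}"
  assumes "L2 T f" "L2 T g"
  shows "L2 T (\<lambda>t. f t - g t)"
proof -
  let ?M = "lebesgue_on {0..T}"
  have "f \<in> borel_measurable ?M" "g \<in> borel_measurable ?M"
    using assms unfolding L2_def by auto
  then have meas: "(\<lambda>t. f t - g t) \<in> borel_measurable ?M"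
    by measurable
  have int: "integrable ?M (\<lambda>t. 2 * (norm (f t))\<^sup>2 + 2 * (norm (g t))\<^sup>2)"
    using assms unfolding L2_def
    by (intro Bochner_Integration.integrable_add Bochner_Integration.integrable_mult_right) auto
  have bound: "(norm (f t - g t))\<^sup>2 \<le> 2 * (norm (f t))\<^sup>2 + 2 * (norm (g t))\<^sup>2" for t
  proof -
    have "(norm (f t - g t))\<^sup>2 \<le> (norm (f t) + norm (g t))\<^sup>2"
      by (intro power_mono norm_triangle_ineq4) simp
    also have "\<dots> \<le> 2 * (norm (f t))\<^sup>2 + 2 * (norm (g t))\<^sup>2"
      using sum_squares_bound[of "norm (f t)" "norm (g t)"] by (simp add: power2_sum)
    finally show ?thesis .
  qed
  have "(\<lambda>t. (norm (f t - g t))\<^sup>2) \<in> borel_measurable ?M"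
    using meas by measurable
  then have "integrable ?M (\<lambda>t. (norm (f t - g t))\<^sup>2)"
    by (rule Bochner_Integration.integrable_bound[OF int _ AE_I2]) (use bound in simp)
  then show ?thesis
    unfolding L2_def using meas by simp
qed

lemma L2_inner_integrable:
  fixes f g :: "real \<Rightarrow> 'a::{real_inner, second_countable_topology}"
  assumes "L2 T f" "L2 T g"
  shows "integrable (lebesgue_on {0..T}) (\<lambda>t. f t \<bullet> g t)"
proof -
  let ?M = "lebesgue_on {0..T}"
  have int: "integrable ?M (\<lambda>t. (norm (f t))\<^sup>2 + (norm (g t))\<^sup>2)"
    using assms unfolding L2_def by (intro Bochner_Integration.integrable_add) auto
  have "f \<in> borel_measurable ?M" "g \<in> borel_measurable ?M"
    using assms unfolding L2_def by auto
  then have meas: "(\<lambda>t. f t \<bullet> g t) \<in> borel_measurable ?M"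
    by measurable
  have bound: "\<bar>f t \<bullet> g t\<bar> \<le> (norm (f t))\<^sup>2 + (norm (g t))\<^sup>2" for t
  proof -
    have "\<bar>f t \<bullet> g t\<bar> \<le> norm (f t) * norm (g t)"
      by (rule Cauchy_Schwarz_ineq2)
    also have "\<dots> \<le> (norm (f t))\<^sup>2 + (norm (g t))\<^sup>2"
      using sum_squares_bound[of "norm (f t)" "norm (g t)"]
        mult_nonneg_nonneg[OF norm_ge_zero norm_ge_zero, of "f t" "g t"] by linarith
    finally show ?thesis .
  qed
  show ?thesis
    by (rule Bochner_Integration.integrable_bound[OF int meas AE_I2]) (use bound in simp)
qed

lemma AE_lebesgue_on_obtain_negligible:
  assumes "AE t in lebesgue_on S. P t" "S \<in> sets lebesgue"
  obtains N where "negligible N" "\<And>t. t \<in> S - N \<Longrightarrow> P t"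
proof -
  have "AE t in lebesgue. t \<in> S \<longrightarrow> P t"
    using assms AE_restrict_space_iff[of S lebesgue P] by simp
  then obtain N where N: "{t \<in> space lebesgue. \<not> (t \<in> S \<longrightarrow> P t)} \<subseteq> N"
      "emeasure lebesgue N = 0" "N \<in> sets lebesgue"
    by (rule AE_E)
  have "negligible N"
    using N(2,3) negligible_iff_null_sets null_setsI by blast
  moreover have "P t" if "t \<in> S - N" for t
    using N(1) that by auto
  ultimately show ?thesis by (rule that)
qed

lemma nn_integral_eq_integral_iff_AE_eq:
  fixes F :: "'a \<Rightarrow> ereal" and f :: "'a \<Rightarrow> real"
  assumes f: "integrable M f" and F: "F \<in> borel_measurable M"
    and F_ge: "AE x in M. ereal (f x) \<le> F x" and F_nonneg: "AE x in M. 0 \<le> F x"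
  shows "enn2ereal (\<integral>\<^sup>+x. e2ennreal (F x) \<partial>M) = ereal (\<integral>x. f x \<partial>M)
    \<longleftrightarrow> (AE x in M. F x = ereal (f x))"
proof
  assume eq: "enn2ereal (\<integral>\<^sup>+x. e2ennreal (F x) \<partial>M) = ereal (\<integral>x. f x \<partial>M)"
  then have "0 \<le> (\<integral>x. f x \<partial>M)"
    using enn2ereal_nonneg by (metis ereal_less_eq(5))
  have nn: "(\<integral>\<^sup>+x. e2ennreal (F x) \<partial>M) = ennreal (\<integral>x. f x \<partial>M)"
    using arg_cong[OF eq, of e2ennreal] by simp
  have F_meas: "(\<lambda>x. e2ennreal (F x)) \<in> borel_measurable M"
    using measurable_compose[OF F measurable_e2ennreal] by (simp add: comp_def)
  have "AE x in M. e2ennreal (F x) \<noteq> \<infinity>"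
    using nn by (intro nn_integral_noteq_infinite[OF F_meas]) simp
  define R where "R x = real_of_ereal (F x)" for x
  have F_R: "AE x in M. F x = ereal (R x)"
    using \<open>AE x in M. e2ennreal (F x) \<noteq> \<infinity>\<close> F_nonneg
  proof eventually_elim
    case (elim x)
    then show ?case by (cases "F x") (auto simp: R_def)
  qed
  have R_nonneg: "AE x in M. 0 \<le> R x"
    using F_R F_nonneg by eventually_elim simp
  have "(\<integral>\<^sup>+x. ennreal (R x) \<partial>M) = (\<integral>\<^sup>+x. e2ennreal (F x) \<partial>M)"
    by (rule nn_integral_cong_AE) (use F_R in \<open>auto elim: eventually_mono\<close>)
  with nn have R_nn: "(\<integral>\<^sup>+x. ennreal (R x) \<partial>M) = ennreal (\<integral>x. f x \<partial>M)"
    by simp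
  have "R \<in> borel_measurable M"
    unfolding R_def using measurable_compose[OF F borel_measurable_real_of_ereal] by (simp add: comp_def)
  then have R_int: "integrable M R"
    using R_nn R_nonneg by (intro integrableI_nonneg) auto
  have "ennreal (\<integral>x. R x \<partial>M) = ennreal (\<integral>x. f x \<partial>M)"
    using nn_integral_eq_integral[OF R_int R_nonneg] R_nn by simp
  then have "(\<integral>x. R x \<partial>M) = (\<integral>x. f x \<partial>M)"
    using integral_nonneg_AE[OF R_nonneg] \<open>0 \<le> (\<integral>x. f x \<partial>M)\<close> by (simp add: ennreal_inj)
  then have "(\<integral>x. R x - f x \<partial>M) = 0"
    using Bochner_Integration.integral_diff[OF R_int f] by simp
  moreover have "AE x in M. 0 \<le> R x - f x"
    using F_R F_ge by eventually_elim simp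
  ultimately have "AE x in M. R x - f x = 0"
    using integral_nonneg_eq_0_iff_AE[OF Bochner_Integration.integrable_diff[OF R_int f]] by simp
  then show "AE x in M. F x = ereal (f x)"
    using F_R by eventually_elim simp
next
  assume F_f: "AE x in M. F x = ereal (f x)"
  then have f_nonneg: "AE x in M. 0 \<le> f x"
    using F_nonneg by eventually_elim simp
  have "(\<integral>\<^sup>+x. e2ennreal (F x) \<partial>M) = (\<integral>\<^sup>+x. ennreal (f x) \<partial>M)"
    using F_f by (intro nn_integral_cong_AE) (auto elim!: eventually_mono simp: e2ennreal_ereal)
  also have "\<dots> = ennreal (\<integral>x. f x \<partial>M)"
    by (rule nn_integral_eq_integral[OF f f_nonneg])
  finally show "enn2ereal (\<integral>\<^sup>+x. e2ennreal (F x) \<partial>M) = ereal (\<integral>x. f x \<partial>M)"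
    using integral_nonneg_AE[OF f_nonneg] by simp
qed

section \<open>The generalized De Giorgi functional\<close>

lemma dphi_eq:
  assumes "subdiff_phi \<phi>1 D\<phi>2 x = {\<xi>}"
  shows "dphi \<phi>1 D\<phi>2 x = \<xi>"
  using assms by (simp add: dphi_def)

lemma chain_rule_integral:
  assumes "0 < T" "chain_rule T \<phi>1 \<phi>2 D\<phi>2" "H1 T y y'" "L2 T \<xi>"
    and "AE t in lebesgue_on {0..T}. \<xi> t \<in> subdiff_phi \<phi>1 D\<phi>2 (y t)"
  obtains c where "phi_fun \<phi>1 \<phi>2 (y 0) = ereal c"
    "phi_fun \<phi>1 \<phi>2 (y T) = ereal (c + (\<integral>t. \<xi> t \<bullet> y' t \<partial>lebesgue_on {0..T}))"
proof -
  obtain g where g: "abs_cont_on 0 T g" "\<forall>t\<in>{0..T}. phi_fun \<phi>1 \<phi>2 (y t) = ereal (g t)"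
      "AE t in lebesgue_on {0..T}. (g has_real_derivative (\<xi> t \<bullet> y' t)) (at t)"
    using assms(2-5) unfolding chain_rule_def by blast
  obtain N where "negligible N" "\<And>t. t \<in> {0..T} - N \<Longrightarrow> (g has_real_derivative (\<xi> t \<bullet> y' t)) (at t)"
    using AE_lebesgue_on_obtain_negligible[OF g(3)] by auto
  then have "((\<lambda>t. \<xi> t \<bullet> y' t) has_integral (g T - g 0)) {0..T}"
    by (rule has_integral_abs_cont_ae_derivative[OF \<open>0 < T\<close> g(1)])
  moreover have "integrable (lebesgue_on {0..T}) (\<lambda>t. \<xi> t \<bullet> y' t)"
    using assms(3,4) by (intro L2_inner_integrable) (auto simp: H1_def)
  ultimately have "(\<integral>t. \<xi> t \<bullet> y' t \<partial>lebesgue_on {0..T}) = g T - g 0"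
    by (simp add: lebesgue_integral_eq_integral integral_unique)
  then show ?thesis
    using that[of "g 0"] g(2) \<open>0 < T\<close> by auto
qed

lemma integrated_fenchel_young_eq_iff:
  fixes V W y :: "real \<Rightarrow> 'a::{real_inner, banach, second_countable_topology}"
  assumes K: "\<And>x. bounded_linear (K x)" "\<And>x a b. K x a \<bullet> b = a \<bullet> K x b" "\<And>x v. 0 \<le> K x v \<bullet> v"
    and V: "L2 T V" and W: "L2 T W"
    and meas: "(\<lambda>t. psi K (y t) (V t) + psi_star K (y t) (W t)) \<in> borel_measurable (lebesgue_on {0..T})"
  shows "enn2ereal (\<integral>\<^sup>+t. e2ennreal (psi K (y t) (V t) + psi_star K (y t) (W t)) \<partial>lebesgue_on {0..T})
      = ereal (\<integral>t. W t \<bullet> V t \<partial>lebesgue_on {0..T})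
    \<longleftrightarrow> (AE t in lebesgue_on {0..T}. V t = K (y t) (W t))"
proof -
  have "enn2ereal (\<integral>\<^sup>+t. e2ennreal (psi K (y t) (V t) + psi_star K (y t) (W t)) \<partial>lebesgue_on {0..T})
      = ereal (\<integral>t. W t \<bullet> V t \<partial>lebesgue_on {0..T})
    \<longleftrightarrow> (AE t in lebesgue_on {0..T}. psi K (y t) (V t) + psi_star K (y t) (W t) = ereal (W t \<bullet> V t))"
  proof (rule nn_integral_eq_integral_iff_AE_eq[OF L2_inner_integrable[OF W V] meas])
    show "AE t in lebesgue_on {0..T}. ereal (W t \<bullet> V t) \<le> psi K (y t) (V t) + psi_star K (y t) (W t)"
      by (simp add: fenchel_young_psi)
    show "AE t in lebesgue_on {0..T}. 0 \<le> psi K (y t) (V t) + psi_star K (y t) (W t)"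
      by (intro AE_I2 add_nonneg_nonneg psi_nonneg psi_star_nonneg K(3))
  qed
  also have "\<dots> \<longleftrightarrow> (AE t in lebesgue_on {0..T}. V t = K (y t) (W t))"
    by (simp only: fenchel_young_psi_eq_iff[OF K])
  finally show ?thesis .
qed

lemma G_DG_eq_zero_iff_energy_identity:
  fixes y y' u :: "real \<Rightarrow> 'a::{real_inner, banach, second_countable_topology}"
  assumes T: "0 < T" and chain: "chain_rule T \<phi>1 \<phi>2 D\<phi>2" and y: "H1 T y y'" "y 0 = y0"
    and y_dom: "AE t in lebesgue_on {0..T}. y t \<in> dom_subdiff_phi \<phi>1 D\<phi>2"
    and single_valued: "\<And>x. x \<in> dom_subdiff_phi \<phi>1 D\<phi>2 \<Longrightarrow> \<exists>\<xi>. subdiff_phi \<phi>1 D\<phi>2 x = {\<xi>}"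
    and L: "\<And>x. bounded_linear (L x)"
    and L_orth: "\<And>x. x \<in> dom_subdiff_phi \<phi>1 D\<phi>2 \<Longrightarrow> adjoint (L x) (dphi \<phi>1 D\<phi>2 x) = 0"
    and u: "L2 T u" and \<xi>: "L2 T (\<lambda>t. dphi \<phi>1 D\<phi>2 (y t))" and LDE: "L2 T (\<lambda>t. L (y t) (DE (y t)))"
  shows "G_DG T K L DE \<phi>1 \<phi>2 D\<phi>2 y0 u y y' = 0 \<longleftrightarrow>
    enn2ereal (\<integral>\<^sup>+t. e2ennreal (psi K (y t) (y' t - L (y t) (DE (y t)))
        + psi_star K (y t) (u t - dphi \<phi>1 D\<phi>2 (y t))) \<partial>lebesgue_on {0..T})
    = ereal (\<integral>t. (u t - dphi \<phi>1 D\<phi>2 (y t)) \<bullet> (y' t - L (y t) (DE (y t))) \<partial>lebesgue_on {0..T})"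
proof -
  let ?M = "lebesgue_on {0..T}"
  let ?\<xi> = "\<lambda>t. dphi \<phi>1 D\<phi>2 (y t)"
  let ?V = "\<lambda>t. y' t - L (y t) (DE (y t))"
  have y': "L2 T y'"
    using y(1) by (simp add: H1_def)
  have V: "L2 T ?V"
    using L2_diff[OF y' LDE] .
  have "AE t in ?M. ?\<xi> t \<in> subdiff_phi \<phi>1 D\<phi>2 (y t)"
    using y_dom by eventually_elim (use single_valued dphi_eq in force)
  then obtain c where \<phi>_0: "phi_fun \<phi>1 \<phi>2 (y 0) = ereal c"
    and \<phi>_T: "phi_fun \<phi>1 \<phi>2 (y T) = ereal (c + (\<integral>t. ?\<xi> t \<bullet> y' t \<partial>?M))"
    using chain_rule_integral[OF T chain y(1) \<xi>] by blast
  \<comment> \<open>The conservative part L(y) DE(y) does no work against \<partial>\<phi>(y).\<close>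
  have "AE t in ?M. ?\<xi> t \<bullet> y' t = ?\<xi> t \<bullet> ?V t"
    using y_dom by eventually_elim
      (use L_orth inner_eq_zero_if_adjoint_eq_zero[OF L] in \<open>simp add: inner_diff_right\<close>)
  then have "(\<integral>t. ?\<xi> t \<bullet> y' t \<partial>?M) = (\<integral>t. ?\<xi> t \<bullet> ?V t \<partial>?M)"
    using L2_inner_integrable[OF \<xi> y'] L2_inner_integrable[OF \<xi> V]
    by (intro integral_cong_AE) (auto dest: borel_measurable_integrable)
  then have "(\<integral>t. u t \<bullet> ?V t \<partial>?M) - (\<integral>t. ?\<xi> t \<bullet> y' t \<partial>?M) = (\<integral>t. (u t - ?\<xi> t) \<bullet> ?V t \<partial>?M)"
    using L2_inner_integrable[OF u V] L2_inner_integrable[OF \<xi> V]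
    by (simp add: inner_diff_left)
  then show ?thesis
    using y_dom y(2) \<phi>_0 \<phi>_T
    by (cases "enn2ereal (\<integral>\<^sup>+t. e2ennreal (psi K (y t) (?V t) + psi_star K (y t) (u t - ?\<xi> t)) \<partial>?M)")
       (auto simp: G_DG_def)
qed

theorem mainTheorem9:
  fixes T :: real
    and E :: "'a::{real_inner, banach, second_countable_topology} \<Rightarrow> real"
    and DE :: "'a \<Rightarrow> 'a"
    and \<phi>1 :: "'a \<Rightarrow> ereal" and \<phi>2 :: "'a \<Rightarrow> real" and D\<phi>2 :: "'a \<Rightarrow> 'a"
    and K L :: "'a \<Rightarrow> 'a \<Rightarrow> 'a"
    and y0 :: 'a and u y y' :: "real \<Rightarrow> 'a"
  assumes T: "T > 0"
    and E_diff: "\<And>x. (E has_derivative (\<lambda>h. DE x \<bullet> h)) (at x)"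
    and phi1: "proper_fun \<phi>1" "convex_ereal_fun \<phi>1" "lsc_fun \<phi>1"
    and phi2: "\<And>x. (\<phi>2 has_derivative (\<lambda>h. D\<phi>2 x \<bullet> h)) (at x)"
    and phi2_lip: "\<exists>C. C-lipschitz_on UNIV D\<phi>2"
    and single_valued: "\<And>x. x \<in> dom_subdiff_phi \<phi>1 D\<phi>2 \<Longrightarrow>
                              \<exists>\<xi>. subdiff_phi \<phi>1 D\<phi>2 x = {\<xi>}"
    and chain: "chain_rule T \<phi>1 \<phi>2 D\<phi>2"
    and K: "\<And>x. bounded_linear (K x)" "\<And>x. adjoint (K x) = K x"
           "\<And>x v. 0 \<le> K x v \<bullet> v"
    and L: "\<And>x. bounded_linear (L x)" "\<And>x. adjoint (L x) = (\<lambda>v. - L x v)"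
    and orth: "\<And>x. x \<in> dom_subdiff_phi \<phi>1 D\<phi>2 \<Longrightarrow>
                 adjoint (L x) (dphi \<phi>1 D\<phi>2 x) = 0 \<and> adjoint (K x) (DE x) = 0"
    and u: "L2 T u"
    and y: "H1 T y y'" "y 0 = y0"
    and y_dom: "AE t in lebesgue_on {0..T}. y t \<in> dom_subdiff_phi \<phi>1 D\<phi>2"
    and dphi_y: "L2 T (\<lambda>t. dphi \<phi>1 D\<phi>2 (y t))"
    and LDE_y: "L2 T (\<lambda>t. L (y t) (DE (y t)))"
    and meas: "(\<lambda>t. psi K (y t) (y' t - L (y t) (DE (y t)))
                 + psi_star K (y t) (u t - dphi \<phi>1 D\<phi>2 (y t)))
               \<in> borel_measurable (lebesgue_on {0..T})"
  shows "G_DG T K L DE \<phi>1 \<phi>2 D\<phi>2 y0 u y y' = 0 \<longleftrightarrow>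
         (AE t in lebesgue_on {0..T}.
            y' t = L (y t) (DE (y t)) - K (y t) (dphi \<phi>1 D\<phi>2 (y t) - u t))"
proof -
  have K_sym: "K x a \<bullet> b = a \<bullet> K x b" for x a b
    using adjoint_works_hilbert[OF K(1), of a x b] K(2) by simp
  have V: "L2 T (\<lambda>t. y' t - L (y t) (DE (y t)))"
    using y(1) LDE_y by (intro L2_diff) (simp_all add: H1_def)
  have W: "L2 T (\<lambda>t. u t - dphi \<phi>1 D\<phi>2 (y t))"
    using u dphi_y by (rule L2_diff)
  have "K (y t) (dphi \<phi>1 D\<phi>2 (y t) - u t) = - K (y t) (u t - dphi \<phi>1 D\<phi>2 (y t))" for t
    using linear_diff[OF bounded_linear.linear[OF K(1)]] by simp
  then have ode_iff: "y' t = L (y t) (DE (y t)) - K (y t) (dphi \<phi>1 D\<phi>2 (y t) - u t)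
      \<longleftrightarrow> y' t - L (y t) (DE (y t)) = K (y t) (u t - dphi \<phi>1 D\<phi>2 (y t))" for t
    by (auto simp: algebra_simps)
  have "G_DG T K L DE \<phi>1 \<phi>2 D\<phi>2 y0 u y y' = 0 \<longleftrightarrow>
      (AE t in lebesgue_on {0..T}. y' t - L (y t) (DE (y t)) = K (y t) (u t - dphi \<phi>1 D\<phi>2 (y t)))"
    using G_DG_eq_zero_iff_energy_identity[OF T chain y y_dom single_valued L(1) conjunct1[OF orth] u dphi_y LDE_y]
      integrated_fenchel_young_eq_iff[OF K(1) K_sym K(3) V W meas] by simp
  then show ?thesis
    by (simp only: ode_iff)
qed

end
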